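(* Let $n\geq 3$, let $X$ be the blowup of $\mathbb{P}^n$ at a point with Calabi-symmetric K\"ahler form $\omega$, and let $\alpha_t$ solve the line bundle mean curvature flow starting at a Calabi-symmetric $\alpha_0$. If $\Theta(\alpha_0)>(n-2)\frac{\pi}{2}$ on $X$, then $\Theta(\alpha_t)>(n-2)\frac{\pi}{2}$ on $X$ for all $t$ for which the flow is defined.
   Context: Line bundle mean curvature flow: $\alpha_t=\alpha_0+i\partial\bar\partial\phi_t$, $\dot\phi_t=\Theta(\alpha_t)-\hat\theta$ where $\hat\theta\in\mathbb{R}$ is a constant and $\Theta(\alpha_t)=\sum_k\arctan(\lambda_k)$ with $\lambda_k$ the eigenvalues of $\omega^{-1}\alpha_t$. The condition $\Theta>(n-2)\frac\pi2$ is called supercritical phase. Calabi symmetry means that on $X\setminus(H\cup E)\cong\mathbb{C}^n\setminus\{0\}$ the forms are $i\partial\bar\partial$ of functions of $\rho=\log|z|^2$ with the standard boundary asymptotics making them extend to $X$ in the classes $a[H]-[E]$ and $p[H]-q[E]$ respectively. *)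

theory Defs
  imports "HOL-Analysis.Analysis"
begin

definition smooth1_on :: "real set \<Rightarrow> (real \<Rightarrow> real) \<Rightarrow> bool" where
  "smooth1_on S f \<longleftrightarrow> (\<forall>k. \<forall>x\<in>S. ((deriv ^^ k) f) differentiable (at x))"

definition pd1 :: "(real \<times> real \<Rightarrow> real) \<Rightarrow> real \<times> real \<Rightarrow> real" where
  "pd1 g = (\<lambda>(t,s). deriv (\<lambda>t'. g (t', s)) t)"

definition pd2 :: "(real \<times> real \<Rightarrow> real) \<Rightarrow> real \<times> real \<Rightarrow> real" where
  "pd2 g = (\<lambda>(t,s). deriv (\<lambda>s'. g (t, s')) s)"

fun pds :: "bool list \<Rightarrow> (real \<times> real \<Rightarrow> real) \<Rightarrow> real \<times> real \<Rightarrow> real" where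
  "pds [] g = g"
| "pds (b # bs) g = (if b then pd1 else pd2) (pds bs g)"

definition smooth2_on :: "(real \<times> real) set \<Rightarrow> (real \<times> real \<Rightarrow> real) \<Rightarrow> bool" where
  "smooth2_on U g \<longleftrightarrow>
     (\<forall>bs. continuous_on U (pds bs g) \<and>
        (\<forall>(t,s)\<in>U. (\<lambda>t'. pds bs g (t', s)) differentiable (at t)
                   \<and> (\<lambda>s'. pds bs g (t, s')) differentiable (at s)))"

text \<open>On X minus (H union E), identified with C^n minus 0, a Calabi symmetric form is
  i ddbar f(rho), rho = log |z|^2.  The potential f gives a smooth closed (1,1)-form on X in the
  class p[H] - q[E] iff f is smooth in rho, and f(rho) - q rho is a smooth function of
  e^rho near E (rho \<rightarrow> -\<infinity>) and f(rho) - p rho is a smooth function of e^(-rho)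
  near H (rho \<rightarrow> +\<infinity>).\<close>
definition calabi_potential :: "real \<Rightarrow> real \<Rightarrow> (real \<Rightarrow> real) \<Rightarrow> bool" where
  "calabi_potential p q f \<longleftrightarrow>
     smooth1_on UNIV f \<and>
     (\<exists>\<delta>>0. \<exists>F G. smooth1_on {-\<delta><..<\<delta>} F \<and> smooth1_on {-\<delta><..<\<delta>} G \<and>
        (\<forall>\<rho>. exp \<rho> < \<delta> \<longrightarrow> f \<rho> = q * \<rho> + F (exp \<rho>)) \<and>
        (\<forall>\<rho>. exp (-\<rho>) < \<delta> \<longrightarrow> f \<rho> = p * \<rho> + G (exp (-\<rho>))))"

text \<open>Calabi symmetric Kaehler form in the class a[H] - [E]: a potential as above
  (with p = a, q = 1) which is positive definite on all of X: u' > 0, u'' > 0 on C^n minus 0,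
  and positivity in the normal directions along E and H.\<close>
definition calabi_kahler :: "real \<Rightarrow> (real \<Rightarrow> real) \<Rightarrow> bool" where
  "calabi_kahler a u \<longleftrightarrow>
     smooth1_on UNIV u \<and> (\<forall>\<rho>. deriv u \<rho> > 0 \<and> deriv (deriv u) \<rho> > 0) \<and>
     (\<exists>\<delta>>0. \<exists>F G. smooth1_on {-\<delta><..<\<delta>} F \<and> smooth1_on {-\<delta><..<\<delta>} G \<and>
        deriv F 0 > 0 \<and> deriv G 0 > 0 \<and>
        (\<forall>\<rho>. exp \<rho> < \<delta> \<longrightarrow> u \<rho> = \<rho> + F (exp \<rho>)) \<and>
        (\<forall>\<rho>. exp (-\<rho>) < \<delta> \<longrightarrow> u \<rho> = a * \<rho> + G (exp (-\<rho>))))"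

text \<open>A time dependent Calabi symmetric function phi_t on X, t in [0,T), which is smooth on
  X x [0,T) (smooth up to t = 0, expressed via smooth extension to an open set):
  smooth jointly in (t, rho) on C^n minus 0, jointly smooth in (t, e^rho) near E and
  in (t, e^(-rho)) near H.\<close>
definition calabi_smooth_family :: "real \<Rightarrow> (real \<Rightarrow> real \<Rightarrow> real) \<Rightarrow> bool" where
  "calabi_smooth_family T \<phi> \<longleftrightarrow>
     (\<exists>U \<Phi>. open U \<and> {0..<T} \<times> UNIV \<subseteq> U \<and> smooth2_on U \<Phi> \<and>
        (\<forall>t\<in>{0..<T}. \<forall>\<rho>. \<Phi> (t, \<rho>) = \<phi> t \<rho>)) \<and>
     (\<exists>\<delta>>0. \<exists>U F. open U \<and> {0..<T} \<times> {0..<\<delta>} \<subseteq> U \<and> smooth2_on U F \<and>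
        (\<forall>t\<in>{0..<T}. \<forall>\<rho>. exp \<rho> < \<delta> \<longrightarrow> \<phi> t \<rho> = F (t, exp \<rho>))) \<and>
     (\<exists>\<delta>>0. \<exists>U G. open U \<and> {0..<T} \<times> {0..<\<delta>} \<subseteq> U \<and> smooth2_on U G \<and>
        (\<forall>t\<in>{0..<T}. \<forall>\<rho>. exp (-\<rho>) < \<delta> \<longrightarrow> \<phi> t \<rho> = G (t, exp (-\<rho>))))"

text \<open>The angle Theta(alpha) = sum_k arctan(lambda_k) at the point with rho = log|z|^2,
  for omega = i ddbar u(rho), alpha = i ddbar v(rho) on C^n minus 0.  Here
  i ddbar f(rho) = f'(rho) i ddbar rho + f''(rho) i d rho /\ dbar rho, and both forms are
  diagonal in the same frame: eigenvalues of omega^{-1} alpha are v'/u' (multiplicity n-1,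
  directions orthogonal to z) and v''/u'' (multiplicity 1, radial direction).\<close>
definition calabi_angle :: "nat \<Rightarrow> (real \<Rightarrow> real) \<Rightarrow> (real \<Rightarrow> real) \<Rightarrow> real \<Rightarrow> real" where
  "calabi_angle n u v \<rho> =
     real (n - 1) * arctan (deriv v \<rho> / deriv u \<rho>)
     + arctan (deriv (deriv v) \<rho> / deriv (deriv u) \<rho>)"

text \<open>Theta(alpha) > c holds on all of X: on C^n minus 0, and on E and H, where (being
  constant there by symmetry and continuous on X) Theta equals the limit as rho tends to
  -infinity, resp. +infinity.\<close>
definition angle_gt_on_X :: "nat \<Rightarrow> (real \<Rightarrow> real) \<Rightarrow> (real \<Rightarrow> real) \<Rightarrow> real \<Rightarrow> bool" where
  "angle_gt_on_X n u v c \<longleftrightarrow>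
     (\<forall>\<rho>. calabi_angle n u v \<rho> > c) \<and>
     (\<exists>L. ((calabi_angle n u v) \<longlongrightarrow> L) at_bot \<and> L > c) \<and>
     (\<exists>L. ((calabi_angle n u v) \<longlongrightarrow> L) at_top \<and> L > c)"

text \<open>Line bundle mean curvature flow in the Calabi symmetric setting on [0,T):
  alpha_t = alpha_0 + i ddbar phi_t with potential v0 + phi_t, phi_0 = 0, phi smooth on
  X x [0,T), and d/dt phi_t = Theta(alpha_t) - theta_hat.\<close>
definition calabi_LBMCF :: "nat \<Rightarrow> (real \<Rightarrow> real) \<Rightarrow> (real \<Rightarrow> real) \<Rightarrow> real \<Rightarrow> real
     \<Rightarrow> (real \<Rightarrow> real \<Rightarrow> real) \<Rightarrow> bool" where
  "calabi_LBMCF n u v0 \<theta> T \<phi> \<longleftrightarrow>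
     calabi_smooth_family T \<phi> \<and> (\<forall>\<rho>. \<phi> 0 \<rho> = 0) \<and>
     (\<forall>t\<in>{0..<T}. \<forall>\<rho>.
        ((\<lambda>s. \<phi> s \<rho>) has_real_derivative
            (calabi_angle n u (\<lambda>r. v0 r + \<phi> t r) \<rho> - \<theta>)) (at t within {0..<T}))"

end

theory Submission
  imports Defs
begin

(* In the Calabi-symmetric picture the angle of alpha_t = i ddbar v_t is the function
     Theta_t = (n-1) arctan (v_t'/u') + arctan (v_t''/u'')
   of rho = log |z|^2.  Since d/dt v_t = Theta_t - theta, symmetry of mixed partials gives
   d/dt v_t' = Theta_t' and d/dt v_t'' = Theta_t'', hence the parabolic equation
     d/dt Theta = (n-1) c1 Theta'/u' + c2 Theta''/u'',   0 < c1, c2 <= 1,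
   and the infimum of Theta_t cannot decrease.  Compactness of X is used through the ends
   rho -> -infinity (E) and rho -> +infinity (H): the boundary asymptotics give limits of the angle there, so
   the initial angle exceeds (n-2) pi/2 uniformly, and the minimum principle can be run on
   [0,t] x R after adding eps (log (2 + e^rho + e^-rho) + C t), a proper barrier whose second
   derivative decays like e^-|rho| and is therefore dominated by u''.
   Neither n >= 3 nor the particular value (n-2) pi/2 matters: every uniform lower bound of
   the angle is preserved. *)

section \<open>Partial derivatives in the plane\<close>

lemma pds_append: "pds bs (pds cs g) = pds (bs @ cs) g"
  by (induction bs) auto

lemma smooth2_on_pds: "smooth2_on U g \<Longrightarrow> smooth2_on U (pds cs g)"
  unfolding smooth2_on_def by (simp add: pds_append)

lemma smooth2_on_pd1: "smooth2_on U g \<Longrightarrow> smooth2_on U (pd1 g)"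
  using smooth2_on_pds[of U g "[True]"] by simp

lemma smooth2_on_pd2: "smooth2_on U g \<Longrightarrow> smooth2_on U (pd2 g)"
  using smooth2_on_pds[of U g "[False]"] by simp

lemma smooth2_on_imp_continuous_on: "smooth2_on U g \<Longrightarrow> continuous_on U g"
  unfolding smooth2_on_def by (metis pds.simps(1))

lemma smooth2_on_has_pd1:
  assumes "smooth2_on U g" "(x, y) \<in> U"
  shows "((\<lambda>x'. g (x', y)) has_real_derivative pd1 g (x, y)) (at x)"
proof -
  have "(\<lambda>x'. g (x', y)) differentiable (at x)"
  proof -
    have "\<forall>(x, y)\<in>U. (\<lambda>x'. pds [] g (x', y)) differentiable (at x)"
      using assms(1) unfolding smooth2_on_def by blast
    then show ?thesis using assms(2) by auto
  qed
  then show ?thesis by (simp add: pd1_def DERIV_deriv_iff_real_differentiable)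
qed

lemma smooth2_on_has_pd2:
  assumes "smooth2_on U g" "(x, y) \<in> U"
  shows "((\<lambda>y'. g (x, y')) has_real_derivative pd2 g (x, y)) (at y)"
proof -
  have "(\<lambda>y'. g (x, y')) differentiable (at y)"
  proof -
    have "\<forall>(x, y)\<in>U. (\<lambda>y'. pds [] g (x, y')) differentiable (at y)"
      using assms(1) unfolding smooth2_on_def by blast
    then show ?thesis using assms(2) by auto
  qed
  then show ?thesis by (simp add: pd2_def DERIV_deriv_iff_real_differentiable)
qed

lemma smooth2_on_isCont_slice:
  assumes "open U" "smooth2_on U g" "(t, x) \<in> U"
  shows "isCont (\<lambda>x. g (t, x)) x"
proof -
  have "isCont g (t, x)"
    using assms smooth2_on_imp_continuous_on continuous_on_eq_continuous_at by blast
  moreover have "isCont (\<lambda>x. (t, x)) x"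
    by (intro continuous_intros)
  ultimately show ?thesis
    using isCont_o2 by fastforce
qed

lemma mixed_second_difference:
  fixes f fx fxy :: "real \<Rightarrow> real \<Rightarrow> real"
  assumes h: "0 < h"
    and fx: "\<And>x y. x \<in> {a..a+h} \<Longrightarrow> y \<in> {b..b+h} \<Longrightarrow> ((\<lambda>x. f x y) has_real_derivative fx x y) (at x)"
    and fxy: "\<And>x y. x \<in> {a..a+h} \<Longrightarrow> y \<in> {b..b+h} \<Longrightarrow> ((\<lambda>y. fx x y) has_real_derivative fxy x y) (at y)"
  obtains \<xi> \<eta> where "\<xi> \<in> {a<..<a+h}" "\<eta> \<in> {b<..<b+h}"
    "f (a+h) (b+h) - f (a+h) b - f a (b+h) + f a b = h * h * fxy \<xi> \<eta>"
proof -
  have "\<exists>\<xi>>a. \<xi> < a + h \<and>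
      (f (a+h) (b+h) - f (a+h) b) - (f a (b+h) - f a b) = (a + h - a) * (fx \<xi> (b+h) - fx \<xi> b)"
    using h by (intro MVT2) (auto intro!: derivative_intros fx)
  then obtain \<xi> where \<xi>: "a < \<xi>" "\<xi> < a + h"
    and \<Delta>: "(f (a+h) (b+h) - f (a+h) b) - (f a (b+h) - f a b) = h * (fx \<xi> (b+h) - fx \<xi> b)"
    by auto
  obtain \<eta> where "b < \<eta>" "\<eta> < b + h" and "fx \<xi> (b+h) - fx \<xi> b = (b + h - b) * fxy \<xi> \<eta>"
    using MVT2[of b "b+h" "fx \<xi>" "fxy \<xi>"] h \<xi> fxy by auto
  with \<xi> \<Delta> show ?thesis
    using that by (auto simp: algebra_simps)
qed

lemma mixed_partials_meet_near:
  assumes g: "smooth2_on U g" and d: "0 < d" "ball z d \<subseteq> U"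
  obtains p p' where "p \<in> ball z d" "p' \<in> ball z d" "pd2 (pd1 g) p = pd1 (pd2 g) p'"
proof -
  obtain t s where z_eq: "z = (t, s)" by fastforce
  define h where "h = d / 3"
  have h: "0 < h" using d by (simp add: h_def)
  have square: "(x, y) \<in> ball z d" if "x \<in> {t..t+h}" "y \<in> {s..s+h}" for x y
  proof -
    have "dist z (x, y) \<le> \<bar>t - x\<bar> + \<bar>s - y\<bar>"
      using sqrt_sum_squares_le_sum_abs by (simp add: z_eq dist_Pair_Pair dist_real_def)
    also have "\<dots> < d" using that d(1) by (auto simp: h_def)
    finally show ?thesis by simp
  qed
  then have inU: "(x, y) \<in> U" if "x \<in> {t..t+h}" "y \<in> {s..s+h}" for x y
    using that d(2) by blast
  obtain \<xi> \<eta> where \<xi>\<eta>: "\<xi> \<in> {t<..<t+h}" "\<eta> \<in> {s<..<s+h}"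
    "g (t+h, s+h) - g (t+h, s) - g (t, s+h) + g (t, s) = h * h * pd2 (pd1 g) (\<xi>, \<eta>)"
    by (rule mixed_second_difference[where f="\<lambda>x y. g (x, y)" and fx="\<lambda>x y. pd1 g (x, y)"])
      (use h smooth2_on_has_pd1[OF g inU] smooth2_on_has_pd2[OF smooth2_on_pd1[OF g] inU] in auto)
  obtain \<eta>' \<xi>' where \<xi>\<eta>': "\<eta>' \<in> {s<..<s+h}" "\<xi>' \<in> {t<..<t+h}"
    "g (t+h, s+h) - g (t, s+h) - g (t+h, s) + g (t, s) = h * h * pd1 (pd2 g) (\<xi>', \<eta>')"
    by (rule mixed_second_difference[where f="\<lambda>y x. g (x, y)" and fx="\<lambda>y x. pd2 g (x, y)"])
      (use h smooth2_on_has_pd2[OF g inU] smooth2_on_has_pd1[OF smooth2_on_pd2[OF g] inU] in auto)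
  have "pd2 (pd1 g) (\<xi>, \<eta>) = pd1 (pd2 g) (\<xi>', \<eta>')"
    using \<xi>\<eta>(3) \<xi>\<eta>'(3) h by (simp add: algebra_simps)
  moreover have "(\<xi>, \<eta>) \<in> ball z d" "(\<xi>', \<eta>') \<in> ball z d"
    using square \<xi>\<eta> \<xi>\<eta>' by auto
  ultimately show ?thesis
    using that by blast
qed

lemma pd1_pd2_commute:
  assumes U: "open U" and g: "smooth2_on U g" and z: "z \<in> U"
  shows "pd1 (pd2 g) z = pd2 (pd1 g) z"
proof (rule ccontr)
  let ?A = "pd1 (pd2 g) z" and ?B = "pd2 (pd1 g) z"
  assume "?A \<noteq> ?B"
  then have e: "0 < dist ?A ?B / 2"
    by simp
  obtain d1 where "0 < d1"
    and d1: "\<And>p. p \<in> U \<Longrightarrow> dist p z < d1 \<Longrightarrow> dist (pd1 (pd2 g) p) ?A < dist ?A ?B / 2"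
    using smooth2_on_imp_continuous_on[OF smooth2_on_pd1[OF smooth2_on_pd2[OF g]]] z e
    unfolding continuous_on_iff by blast
  obtain d2 where "0 < d2"
    and d2: "\<And>p. p \<in> U \<Longrightarrow> dist p z < d2 \<Longrightarrow> dist (pd2 (pd1 g) p) ?B < dist ?A ?B / 2"
    using smooth2_on_imp_continuous_on[OF smooth2_on_pd2[OF smooth2_on_pd1[OF g]]] z e
    unfolding continuous_on_iff by blast
  obtain d3 where "0 < d3" "ball z d3 \<subseteq> U"
    using U z open_contains_ball by blast
  define d where "d = min d1 (min d2 d3)"
  have "0 < d" "ball z d \<subseteq> U"
    using \<open>0 < d1\<close> \<open>0 < d2\<close> \<open>0 < d3\<close> \<open>ball z d3 \<subseteq> U\<close> by (auto simp: d_def)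
  then obtain p p' where p: "p \<in> ball z d" "p' \<in> ball z d" and eq: "pd2 (pd1 g) p = pd1 (pd2 g) p'"
    using mixed_partials_meet_near[OF g] by blast
  have "p \<in> U" "p' \<in> U" "dist p z < d2" "dist p' z < d1"
    using p \<open>ball z d \<subseteq> U\<close> by (auto simp: d_def dist_commute)
  then have "dist (pd1 (pd2 g) p') ?A < dist ?A ?B / 2" "dist (pd2 (pd1 g) p) ?B < dist ?A ?B / 2"
    using d1 d2 by blast+
  then show False
    using dist_triangle3[of ?A ?B "pd1 (pd2 g) p'"] by (simp only: eq)
qed

section \<open>Functions of one real variable\<close>

lemma smooth1_on_derivs:
  assumes "smooth1_on S f" "x \<in> S"
  shows "(f has_real_derivative deriv f x) (at x)"
    and "(deriv f has_real_derivative deriv (deriv f) x) (at x)"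
    and "isCont (deriv f) x" and "isCont (deriv (deriv f)) x"
proof -
  have k: "((deriv ^^ k) f) differentiable (at x)" for k
    using assms unfolding smooth1_on_def by blast
  show "(f has_real_derivative deriv f x) (at x)"
    using k[of 0] by (simp add: DERIV_deriv_iff_real_differentiable)
  show f'': "(deriv f has_real_derivative deriv (deriv f) x) (at x)"
    using k[of 1] by (simp add: DERIV_deriv_iff_real_differentiable)
  then show "isCont (deriv f) x"
    by (rule DERIV_isCont)
  show "isCont (deriv (deriv f)) x"
    using k[of 2] by (simp add: differentiable_imp_continuous_within numeral_2_eq_2)
qed

lemma DERIV_global_min_second_order:
  fixes f f' :: "real \<Rightarrow> real"
  assumes min: "\<And>r. f x \<le> f r"
    and f': "\<And>r. (f has_real_derivative f' r) (at r)"
    and f'': "(f' has_real_derivative f'') (at x)"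
  shows "f' x = 0" and "0 \<le> f''"
proof -
  show crit: "f' x = 0"
    using DERIV_local_min[OF f'[of x], of 1] min by auto
  show "0 \<le> f''"
  proof (rule ccontr)
    assume "\<not> 0 \<le> f''"
    then obtain e where "0 < e" and dec: "\<And>h. 0 < h \<Longrightarrow> h < e \<Longrightarrow> f' (x + h) < f' x"
      using DERIV_neg_dec_right[OF f''] by force
    obtain z where z: "x < z" "z < x + e/2" and mvt: "f (x + e/2) - f x = (x + e/2 - x) * f' z"
      using MVT2[of x "x + e/2" f f'] f' \<open>0 < e\<close> by auto
    have "f' z < 0"
      using dec[of "z - x"] z crit by auto
    then have "(x + e/2 - x) * f' z < 0"
      using \<open>0 < e\<close> by (intro mult_pos_neg) auto
    then have "f (x + e/2) < f x"
      using mvt by linarith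
    then show False
      using min[of "x + e/2"] by simp
  qed
qed

lemma continuous_lower_bound_from_ends:
  fixes f :: "real \<Rightarrow> real"
  assumes "continuous_on UNIV f"
    and "eventually (\<lambda>x. b \<le> f x) at_bot" "eventually (\<lambda>x. b \<le> f x) at_top"
  obtains x0 where "\<And>x. min b (f x0) \<le> f x"
proof -
  obtain R1 R2 where R1: "\<And>x. x \<le> R1 \<Longrightarrow> b \<le> f x" and R2: "\<And>x. R2 \<le> x \<Longrightarrow> b \<le> f x"
    using assms(2,3) by (auto simp: eventually_at_bot_linorder eventually_at_top_linorder)
  define R where "R = max \<bar>R1\<bar> \<bar>R2\<bar>"
  have "{-R..R} \<noteq> {}"
    by (simp add: R_def)
  then obtain x0 where x0: "\<And>y. y \<in> {-R..R} \<Longrightarrow> f x0 \<le> f y"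
    using continuous_attains_inf[OF compact_Icc _ continuous_on_subset[OF assms(1) subset_UNIV]]
    by blast
  have "min b (f x0) \<le> f x" for x
  proof (cases "x \<in> {-R..R}")
    case True
    then show ?thesis
      using x0 by (simp add: min.coboundedI2)
  next
    case False
    then have "x \<le> R1 \<or> R2 \<le> x"
      by (auto simp: R_def)
    then show ?thesis
      using R1 R2 by (auto simp: min.coboundedI1)
  qed
  then show ?thesis
    using that by blast
qed

lemma uniform_lower_bound_from_limits:
  fixes f :: "real \<Rightarrow> real"
  assumes "continuous_on UNIV f" "\<And>x. c < f x"
    and "(f \<longlongrightarrow> L1) at_bot" "c < L1" "(f \<longlongrightarrow> L2) at_top" "c < L2"
  obtains m where "c < m" "\<And>x. m \<le> f x"
proof -
  define b where "b = min ((c + L1) / 2) ((c + L2) / 2)"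
  have "b < L1" "b < L2"
    using assms(4,6) by (simp_all add: b_def min_less_iff_disj)
  then have "eventually (\<lambda>x. b < f x) at_bot" "eventually (\<lambda>x. b < f x) at_top"
    using order_tendstoD(1)[OF assms(3)] order_tendstoD(1)[OF assms(5)] by blast+
  then obtain x0 where "\<And>x. min b (f x0) \<le> f x"
    using continuous_lower_bound_from_ends[OF assms(1), of b]
    by (metis (mono_tags, lifting) eventually_mono less_imp_le)
  moreover have "c < min b (f x0)"
    using assms(2,4,6) by (simp add: b_def)
  ultimately show ?thesis
    using that by blast
qed

section \<open>Asymptotics at the ends of the cylinder\<close>

lemma exp_filterlim_at_right_0:
  "filterlim (\<lambda>\<rho>. exp (1 * \<rho>)) (at_right (0::real)) at_bot"
  "filterlim (\<lambda>\<rho>. exp (-1 * \<rho>)) (at_right (0::real)) at_top"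
  by (auto intro!: tendsto_imp_filterlim_at_right exp_at_bot filterlim_compose[OF exp_at_bot]
      filterlim_uminus_at_bot_at_top)

lemma deriv_of_expansion:
  fixes f H H' :: "real \<Rightarrow> real"
  assumes f: "\<And>\<rho>. exp (\<sigma> * \<rho>) < \<delta> \<Longrightarrow> f \<rho> = c * \<rho> + H (exp (\<sigma> * \<rho>))"
    and H': "\<And>x. 0 < x \<Longrightarrow> x < \<delta> \<Longrightarrow> (H has_real_derivative H' x) (at x)"
    and \<rho>: "exp (\<sigma> * \<rho>) < \<delta>"
  shows "deriv f \<rho> = c + \<sigma> * exp (\<sigma> * \<rho>) * H' (exp (\<sigma> * \<rho>))"
proof -
  have "open {\<rho>. exp (\<sigma> * \<rho>) < \<delta>}"
    by (intro open_Collect_less continuous_intros)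
  have H'_at: "(H has_real_derivative H' (exp (\<sigma> * \<rho>))) (at (exp (\<sigma> * \<rho>)))"
    using H' \<rho> by simp
  have exp_at: "((\<lambda>\<rho>. exp (\<sigma> * \<rho>)) has_real_derivative \<sigma> * exp (\<sigma> * \<rho>)) (at \<rho>)"
    by (auto intro!: derivative_eq_intros)
  from DERIV_add[OF DERIV_cmult[where c=c, OF DERIV_ident] DERIV_chain2[OF H'_at exp_at]]
  have "((\<lambda>\<rho>. c * \<rho> + H (exp (\<sigma> * \<rho>))) has_real_derivative
      c + \<sigma> * exp (\<sigma> * \<rho>) * H' (exp (\<sigma> * \<rho>))) (at \<rho>)"
    by (simp add: algebra_simps)
  then have "(f has_real_derivative c + \<sigma> * exp (\<sigma> * \<rho>) * H' (exp (\<sigma> * \<rho>))) (at \<rho>)"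
    by (rule has_field_derivative_transform_within_open[OF _ \<open>open {\<rho>. exp (\<sigma> * \<rho>) < \<delta>}\<close>])
      (use f \<rho> in auto)
  then show ?thesis
    by (rule DERIV_imp_deriv)
qed

lemma deriv2_of_expansion:
  fixes f H H' H'' :: "real \<Rightarrow> real"
  assumes \<sigma>: "\<bar>\<sigma>\<bar> = 1"
    and f: "\<And>\<rho>. exp (\<sigma> * \<rho>) < \<delta> \<Longrightarrow> f \<rho> = c * \<rho> + H (exp (\<sigma> * \<rho>))"
    and H': "\<And>x. 0 < x \<Longrightarrow> x < \<delta> \<Longrightarrow> (H has_real_derivative H' x) (at x)"
    and H'': "\<And>x. 0 < x \<Longrightarrow> x < \<delta> \<Longrightarrow> (H' has_real_derivative H'' x) (at x)"
    and \<rho>: "exp (\<sigma> * \<rho>) < \<delta>"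
  shows "deriv (deriv f) \<rho>
    = exp (\<sigma> * \<rho>) * (H' (exp (\<sigma> * \<rho>)) + exp (\<sigma> * \<rho>) * H'' (exp (\<sigma> * \<rho>)))"
proof -
  have f': "deriv f r = 0 * r + (c + \<sigma> * exp (\<sigma> * r) * H' (exp (\<sigma> * r)))"
    if "exp (\<sigma> * r) < \<delta>" for r
    using deriv_of_expansion[OF f H' that] by simp
  have H'_D: "((\<lambda>x. c + \<sigma> * x * H' x) has_real_derivative \<sigma> * (H' x + x * H'' x)) (at x)"
    if "0 < x" "x < \<delta>" for x
    using H''[OF that] by (auto intro!: derivative_eq_intros simp: distrib_left)
  have "deriv (deriv f) \<rho> = 0 + \<sigma> * exp (\<sigma> * \<rho>) * (\<sigma> * (H' (exp (\<sigma> * \<rho>))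
      + exp (\<sigma> * \<rho>) * H'' (exp (\<sigma> * \<rho>))))"
    by (rule deriv_of_expansion[where H="\<lambda>x. c + \<sigma> * x * H' x", OF f' H'_D \<rho>])
  also have "\<dots> = exp (\<sigma> * \<rho>) * ((\<sigma> * \<sigma>) * (H' (exp (\<sigma> * \<rho>))
      + exp (\<sigma> * \<rho>) * H'' (exp (\<sigma> * \<rho>))))"
    by (simp only: mult_ac add_0_left)
  also have "\<sigma> * \<sigma> = 1"
    using \<sigma> abs_mult_self_eq[of \<sigma>] by simp
  finally show ?thesis
    by simp
qed

(* \<sigma> = 1 describes the end E (\<rho> \<rightarrow> -\<infinity>, smooth coordinate e^\<rho>),
   \<sigma> = -1 the end H (\<rho> \<rightarrow> +\<infinity>, smooth coordinate e^-\<rho>). *)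
lemma deriv_tendsto_of_expansion:
  fixes f H H' H'' :: "real \<Rightarrow> real"
  assumes \<sigma>: "\<bar>\<sigma>\<bar> = 1" and "0 < \<delta>"
    and F: "filterlim (\<lambda>\<rho>. exp (\<sigma> * \<rho>)) (at_right 0) F"
    and f: "\<And>\<rho>. exp (\<sigma> * \<rho>) < \<delta> \<Longrightarrow> f \<rho> = c * \<rho> + H (exp (\<sigma> * \<rho>))"
    and H': "\<And>x. 0 < x \<Longrightarrow> x < \<delta> \<Longrightarrow> (H has_real_derivative H' x) (at x)"
    and H'': "\<And>x. 0 < x \<Longrightarrow> x < \<delta> \<Longrightarrow> (H' has_real_derivative H'' x) (at x)"
    and "isCont H' 0" "isCont H'' 0"
  shows "(deriv f \<longlongrightarrow> c) F"
    and "((\<lambda>\<rho>. deriv (deriv f) \<rho> / exp (\<sigma> * \<rho>)) \<longlongrightarrow> H' 0) F"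
proof -
  have exp0: "((\<lambda>\<rho>. exp (\<sigma> * \<rho>)) \<longlongrightarrow> 0) F"
    using F by (simp add: filterlim_at)
  then have ev: "eventually (\<lambda>\<rho>. exp (\<sigma> * \<rho>) < \<delta>) F"
    using order_tendstoD(2) \<open>0 < \<delta>\<close> by blast
  have H'0: "((\<lambda>\<rho>. H' (exp (\<sigma> * \<rho>))) \<longlongrightarrow> H' 0) F"
    and H''0: "((\<lambda>\<rho>. H'' (exp (\<sigma> * \<rho>))) \<longlongrightarrow> H'' 0) F"
    using isCont_tendsto_compose[OF \<open>isCont H' 0\<close> exp0] isCont_tendsto_compose[OF \<open>isCont H'' 0\<close> exp0] .
  have "((\<lambda>\<rho>. c + \<sigma> * exp (\<sigma> * \<rho>) * H' (exp (\<sigma> * \<rho>))) \<longlongrightarrow> c + \<sigma> * 0 * H' 0) F"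
    by (intro tendsto_intros exp0 H'0)
  then have "((\<lambda>\<rho>. c + \<sigma> * exp (\<sigma> * \<rho>) * H' (exp (\<sigma> * \<rho>))) \<longlongrightarrow> c) F"
    by simp
  moreover have "eventually (\<lambda>\<rho>. c + \<sigma> * exp (\<sigma> * \<rho>) * H' (exp (\<sigma> * \<rho>)) = deriv f \<rho>) F"
    using ev by eventually_elim (simp add: deriv_of_expansion[OF f H'])
  ultimately show "(deriv f \<longlongrightarrow> c) F"
    by (rule Lim_transform_eventually)
  have "((\<lambda>\<rho>. H' (exp (\<sigma> * \<rho>)) + exp (\<sigma> * \<rho>) * H'' (exp (\<sigma> * \<rho>))) \<longlongrightarrow> H' 0 + 0 * H'' 0) F"
    by (intro tendsto_intros exp0 H'0 H''0)
  then have "((\<lambda>\<rho>. H' (exp (\<sigma> * \<rho>)) + exp (\<sigma> * \<rho>) * H'' (exp (\<sigma> * \<rho>))) \<longlongrightarrow> H' 0) F"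
    by simp
  moreover have "eventually (\<lambda>\<rho>. H' (exp (\<sigma> * \<rho>)) + exp (\<sigma> * \<rho>) * H'' (exp (\<sigma> * \<rho>))
      = deriv (deriv f) \<rho> / exp (\<sigma> * \<rho>)) F"
    using ev by eventually_elim (simp add: deriv2_of_expansion[OF \<sigma> f H' H''])
  ultimately show "((\<lambda>\<rho>. deriv (deriv f) \<rho> / exp (\<sigma> * \<rho>)) \<longlongrightarrow> H' 0) F"
    by (rule Lim_transform_eventually)
qed

lemma deriv_tendsto_of_smooth1_expansion:
  fixes f H :: "real \<Rightarrow> real"
  assumes "\<bar>\<sigma>\<bar> = 1" "0 < \<delta>" "filterlim (\<lambda>\<rho>. exp (\<sigma> * \<rho>)) (at_right 0) F"
    and H: "smooth1_on {-\<delta><..<\<delta>} H"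
    and f: "\<And>\<rho>. exp (\<sigma> * \<rho>) < \<delta> \<Longrightarrow> f \<rho> = c * \<rho> + H (exp (\<sigma> * \<rho>))"
  shows "(deriv f \<longlongrightarrow> c) F"
    and "((\<lambda>\<rho>. deriv (deriv f) \<rho> / exp (\<sigma> * \<rho>)) \<longlongrightarrow> deriv H 0) F"
proof -
  have "x \<in> {-\<delta><..<\<delta>}" if "0 \<le> x" "x < \<delta>" for x
    using that by simp
  then show "(deriv f \<longlongrightarrow> c) F" "((\<lambda>\<rho>. deriv (deriv f) \<rho> / exp (\<sigma> * \<rho>)) \<longlongrightarrow> deriv H 0) F"
    using deriv_tendsto_of_expansion[OF assms(1-3) f, of "deriv H" "deriv (deriv H)"]
      smooth1_on_derivs[OF H] assms(2) by auto
qed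

lemma deriv_tendsto_of_smooth_family_expansion:
  fixes v0 \<psi> G :: "real \<Rightarrow> real" and K :: "real \<times> real \<Rightarrow> real"
  assumes \<sigma>: "\<bar>\<sigma>\<bar> = 1" and F: "filterlim (\<lambda>\<rho>. exp (\<sigma> * \<rho>)) (at_right 0) F"
    and "0 < \<delta>" and G: "smooth1_on {-\<delta><..<\<delta>} G"
    and v0: "\<And>\<rho>. exp (\<sigma> * \<rho>) < \<delta> \<Longrightarrow> v0 \<rho> = c * \<rho> + G (exp (\<sigma> * \<rho>))"
    and "0 < \<delta>'" and V: "open V" and K: "smooth2_on V K" and tV: "\<And>x. x \<in> {0..<\<delta>'} \<Longrightarrow> (t, x) \<in> V"
    and \<psi>: "\<And>\<rho>. exp (\<sigma> * \<rho>) < \<delta>' \<Longrightarrow> \<psi> \<rho> = K (t, exp (\<sigma> * \<rho>))"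
  shows "(deriv (\<lambda>r. v0 r + \<psi> r) \<longlongrightarrow> c) F"
    and "((\<lambda>\<rho>. deriv (deriv (\<lambda>r. v0 r + \<psi> r)) \<rho> / exp (\<sigma> * \<rho>)) \<longlongrightarrow> deriv G 0 + pd2 K (t, 0)) F"
proof -
  define \<delta>1 where "\<delta>1 = min \<delta> \<delta>'"
  have "0 < \<delta>1"
    using \<open>0 < \<delta>\<close> \<open>0 < \<delta>'\<close> by (simp add: \<delta>1_def)
  have G': "(G has_real_derivative deriv G x) (at x)"
    and G'': "(deriv G has_real_derivative deriv (deriv G) x) (at x)"
    and tV': "(t, x) \<in> V" if "0 < x" "x < \<delta>1" for x
    using smooth1_on_derivs[OF G, of x] tV[of x] that by (auto simp: \<delta>1_def)
  have "isCont (deriv G) 0" "isCont (deriv (deriv G)) 0"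
    using smooth1_on_derivs[OF G] \<open>0 < \<delta>\<close> by auto
  moreover have "isCont (\<lambda>x. pd2 K (t, x)) 0" "isCont (\<lambda>x. pd2 (pd2 K) (t, x)) 0"
    using smooth2_on_isCont_slice[OF V smooth2_on_pd2[OF K]]
      smooth2_on_isCont_slice[OF V smooth2_on_pd2[OF smooth2_on_pd2[OF K]]] tV \<open>0 < \<delta>'\<close> by auto
  moreover have "((\<lambda>x. G x + K (t, x)) has_real_derivative deriv G x + pd2 K (t, x)) (at x)"
    and "((\<lambda>x. deriv G x + pd2 K (t, x)) has_real_derivative deriv (deriv G) x + pd2 (pd2 K) (t, x)) (at x)"
    if "0 < x" "x < \<delta>1" for x
    using G'[OF that] G''[OF that] smooth2_on_has_pd2[OF K tV'[OF that]]
      smooth2_on_has_pd2[OF smooth2_on_pd2[OF K] tV'[OF that]]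
    by (auto intro!: derivative_intros)
  moreover have "v0 \<rho> + \<psi> \<rho> = c * \<rho> + (G (exp (\<sigma> * \<rho>)) + K (t, exp (\<sigma> * \<rho>)))"
    if "exp (\<sigma> * \<rho>) < \<delta>1" for \<rho>
    using v0 \<psi> that by (simp add: \<delta>1_def)
  ultimately show "(deriv (\<lambda>r. v0 r + \<psi> r) \<longlongrightarrow> c) F"
    and "((\<lambda>\<rho>. deriv (deriv (\<lambda>r. v0 r + \<psi> r)) \<rho> / exp (\<sigma> * \<rho>)) \<longlongrightarrow> deriv G 0 + pd2 K (t, 0)) F"
    using deriv_tendsto_of_expansion[OF \<sigma> \<open>0 < \<delta>1\<close> F, where f="\<lambda>r. v0 r + \<psi> r"
        and H'="\<lambda>x. deriv G x + pd2 K (t, x)" and H''="\<lambda>x. deriv (deriv G) x + pd2 (pd2 K) (t, x)"]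
    by (auto intro!: continuous_intros)
qed

lemma calabi_angle_tendsto:
  assumes u': "(deriv u \<longlongrightarrow> cu) F" "cu \<noteq> 0"
    and u'': "((\<lambda>\<rho>. deriv (deriv u) \<rho> / w \<rho>) \<longlongrightarrow> lu) F" "lu \<noteq> 0"
    and v': "(deriv v \<longlongrightarrow> cv) F"
    and v'': "((\<lambda>\<rho>. deriv (deriv v) \<rho> / w \<rho>) \<longlongrightarrow> lv) F"
    and w: "\<And>\<rho>. w \<rho> \<noteq> 0"
  shows "(calabi_angle n u v \<longlongrightarrow> real (n - 1) * arctan (cv / cu) + arctan (lv / lu)) F"
proof -
  have "calabi_angle n u v = (\<lambda>\<rho>. real (n - 1) * arctan (deriv v \<rho> / deriv u \<rho>)
      + arctan ((deriv (deriv v) \<rho> / w \<rho>) / (deriv (deriv u) \<rho> / w \<rho>)))"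
    using w by (simp add: calabi_angle_def fun_eq_iff)
  then show ?thesis
    by (simp only:) (intro tendsto_intros assms)
qed

lemma calabi_kahler_asymptotics:
  assumes "calabi_kahler a u"
  obtains l l' where "(deriv u \<longlongrightarrow> 1) at_bot"
    and "((\<lambda>\<rho>. deriv (deriv u) \<rho> / exp \<rho>) \<longlongrightarrow> l) at_bot" "0 < l"
    and "(deriv u \<longlongrightarrow> a) at_top"
    and "((\<lambda>\<rho>. deriv (deriv u) \<rho> / exp (- \<rho>)) \<longlongrightarrow> l') at_top" "0 < l'"
proof -
  obtain \<delta> F G where "0 < \<delta>" and F: "smooth1_on {-\<delta><..<\<delta>} F" and G: "smooth1_on {-\<delta><..<\<delta>} G"
    and "0 < deriv F 0" "0 < deriv G 0"
    and E: "\<forall>\<rho>. exp \<rho> < \<delta> \<longrightarrow> u \<rho> = \<rho> + F (exp \<rho>)"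
    and H: "\<forall>\<rho>. exp (- \<rho>) < \<delta> \<longrightarrow> u \<rho> = a * \<rho> + G (exp (- \<rho>))"
    using assms unfolding calabi_kahler_def by blast
  have "(deriv u \<longlongrightarrow> 1) at_bot" "((\<lambda>\<rho>. deriv (deriv u) \<rho> / exp \<rho>) \<longlongrightarrow> deriv F 0) at_bot"
    using deriv_tendsto_of_smooth1_expansion[OF _ \<open>0 < \<delta>\<close> exp_filterlim_at_right_0(1) F, of u 1] E
    by auto
  moreover have "(deriv u \<longlongrightarrow> a) at_top"
    "((\<lambda>\<rho>. deriv (deriv u) \<rho> / exp (- \<rho>)) \<longlongrightarrow> deriv G 0) at_top"
    using deriv_tendsto_of_smooth1_expansion[OF _ \<open>0 < \<delta>\<close> exp_filterlim_at_right_0(2) G, of u a] H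
    by auto
  ultimately show ?thesis
    using that \<open>0 < deriv F 0\<close> \<open>0 < deriv G 0\<close> by blast
qed

lemma calabi_kahler_deriv_ge_1:
  assumes "calabi_kahler a u"
  shows "1 \<le> deriv u \<rho>"
proof -
  have u: "smooth1_on UNIV u" "\<And>\<rho>. 0 < deriv (deriv u) \<rho>"
    using assms unfolding calabi_kahler_def by auto
  have mono: "deriv u r \<le> deriv u \<rho>" if "r \<le> \<rho>" for r
    using DERIV_nonneg_imp_nondecreasing[OF that, of "deriv u"] smooth1_on_derivs(2)[OF u(1)] u(2)
      less_imp_le by blast
  obtain l where "(deriv u \<longlongrightarrow> 1) at_bot"
    using calabi_kahler_asymptotics[OF assms] by blast
  then show ?thesis
    by (rule tendsto_upperbound) (auto simp: eventually_at_bot_linorder intro: mono)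
qed

lemma calabi_kahler_class_ge_1:
  assumes "calabi_kahler a u"
  shows "1 \<le> a"
proof -
  obtain l where "(deriv u \<longlongrightarrow> a) at_top"
    using calabi_kahler_asymptotics[OF assms] by blast
  then show ?thesis
    by (rule tendsto_lowerbound) (simp_all add: calabi_kahler_deriv_ge_1[OF assms])
qed

lemma calabi_flow_angle_limits:
  assumes u: "calabi_kahler a u" and v0: "calabi_potential p q v0"
    and \<phi>: "calabi_smooth_family T \<phi>" and t: "t \<in> {0..<T}"
  shows "\<exists>L. (calabi_angle n u (\<lambda>r. v0 r + \<phi> t r) \<longlongrightarrow> L) at_bot"
    and "\<exists>L. (calabi_angle n u (\<lambda>r. v0 r + \<phi> t r) \<longlongrightarrow> L) at_top"
proof -
  obtain \<delta> F0 G0 where "0 < \<delta>" and F0: "smooth1_on {-\<delta><..<\<delta>} F0" and G0: "smooth1_on {-\<delta><..<\<delta>} G0"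
    and v0E: "\<forall>\<rho>. exp \<rho> < \<delta> \<longrightarrow> v0 \<rho> = q * \<rho> + F0 (exp \<rho>)"
    and v0H: "\<forall>\<rho>. exp (- \<rho>) < \<delta> \<longrightarrow> v0 \<rho> = p * \<rho> + G0 (exp (- \<rho>))"
    using v0 unfolding calabi_potential_def by blast
  obtain \<delta>E UE FE where "0 < \<delta>E" "open UE" "{0..<T} \<times> {0..<\<delta>E} \<subseteq> UE" "smooth2_on UE FE"
    and \<phi>E: "\<forall>t\<in>{0..<T}. \<forall>\<rho>. exp \<rho> < \<delta>E \<longrightarrow> \<phi> t \<rho> = FE (t, exp \<rho>)"
    using \<phi> unfolding calabi_smooth_family_def by blast
  obtain \<delta>H UH GH where "0 < \<delta>H" "open UH" "{0..<T} \<times> {0..<\<delta>H} \<subseteq> UH" "smooth2_on UH GH"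
    and \<phi>H: "\<forall>t\<in>{0..<T}. \<forall>\<rho>. exp (- \<rho>) < \<delta>H \<longrightarrow> \<phi> t \<rho> = GH (t, exp (- \<rho>))"
    using \<phi> unfolding calabi_smooth_family_def by blast
  have tE: "(t, x) \<in> UE" if "x \<in> {0..<\<delta>E}" for x
    using \<open>{0..<T} \<times> {0..<\<delta>E} \<subseteq> UE\<close> t that by auto
  have tH: "(t, x) \<in> UH" if "x \<in> {0..<\<delta>H}" for x
    using \<open>{0..<T} \<times> {0..<\<delta>H} \<subseteq> UH\<close> t that by auto
  have vE: "(deriv (\<lambda>r. v0 r + \<phi> t r) \<longlongrightarrow> q) at_bot"
    "((\<lambda>\<rho>. deriv (deriv (\<lambda>r. v0 r + \<phi> t r)) \<rho> / exp \<rho>) \<longlongrightarrow> deriv F0 0 + pd2 FE (t, 0)) at_bot"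
    using deriv_tendsto_of_smooth_family_expansion[OF _ exp_filterlim_at_right_0(1) \<open>0 < \<delta>\<close> F0 _
        \<open>0 < \<delta>E\<close> \<open>open UE\<close> \<open>smooth2_on UE FE\<close> tE, of v0 q "\<phi> t"]
      v0E \<phi>E t by auto
  have vH: "(deriv (\<lambda>r. v0 r + \<phi> t r) \<longlongrightarrow> p) at_top"
    "((\<lambda>\<rho>. deriv (deriv (\<lambda>r. v0 r + \<phi> t r)) \<rho> / exp (- \<rho>)) \<longlongrightarrow> deriv G0 0 + pd2 GH (t, 0)) at_top"
    using deriv_tendsto_of_smooth_family_expansion[OF _ exp_filterlim_at_right_0(2) \<open>0 < \<delta>\<close> G0 _
        \<open>0 < \<delta>H\<close> \<open>open UH\<close> \<open>smooth2_on UH GH\<close> tH, of v0 p "\<phi> t"]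
      v0H \<phi>H t by auto
  obtain l l' where uE: "(deriv u \<longlongrightarrow> 1) at_bot" "((\<lambda>\<rho>. deriv (deriv u) \<rho> / exp \<rho>) \<longlongrightarrow> l) at_bot" "0 < l"
    and uH: "(deriv u \<longlongrightarrow> a) at_top" "((\<lambda>\<rho>. deriv (deriv u) \<rho> / exp (- \<rho>)) \<longlongrightarrow> l') at_top" "0 < l'"
    using calabi_kahler_asymptotics[OF u] by blast
  have "a \<noteq> 0"
    using calabi_kahler_class_ge_1[OF u] by simp
  then show "\<exists>L. (calabi_angle n u (\<lambda>r. v0 r + \<phi> t r) \<longlongrightarrow> L) at_bot"
    and "\<exists>L. (calabi_angle n u (\<lambda>r. v0 r + \<phi> t r) \<longlongrightarrow> L) at_top"
    using calabi_angle_tendsto[OF uE(1) _ uE(2) _ vE] calabi_angle_tendsto[OF uH(1) _ uH(2) _ vH]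
      \<open>0 < l\<close> \<open>0 < l'\<close> by auto
qed

lemma continuous_on_calabi_angle:
  assumes "calabi_kahler a u" "smooth1_on UNIV v"
  shows "continuous_on UNIV (calabi_angle n u v)"
proof -
  have "deriv u \<rho> \<noteq> 0" "deriv (deriv u) \<rho> \<noteq> 0" for \<rho>
    using calabi_kahler_deriv_ge_1[OF assms(1), of \<rho>] assms(1) unfolding calabi_kahler_def
    by (metis less_irrefl not_one_le_zero)+
  moreover have "smooth1_on UNIV u"
    using assms(1) by (simp add: calabi_kahler_def)
  ultimately show ?thesis
    unfolding calabi_angle_def[abs_def]
    using smooth1_on_derivs(3,4)[OF assms(2)] smooth1_on_derivs(3,4)[OF \<open>smooth1_on UNIV u\<close>]
    by (intro continuous_at_imp_continuous_on ballI continuous_intros) auto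
qed

lemma angle_gt_on_X_imp_uniform:
  assumes "calabi_kahler a u" "calabi_potential p q v" "angle_gt_on_X n u v c"
  obtains m where "c < m" "\<And>\<rho>. m \<le> calabi_angle n u v \<rho>"
proof -
  have "continuous_on UNIV (calabi_angle n u v)"
    using continuous_on_calabi_angle assms(1,2) by (simp add: calabi_potential_def)
  moreover obtain L1 L2 where "\<forall>\<rho>. c < calabi_angle n u v \<rho>"
    "(calabi_angle n u v \<longlongrightarrow> L1) at_bot" "c < L1" "(calabi_angle n u v \<longlongrightarrow> L2) at_top" "c < L2"
    using assms(3) unfolding angle_gt_on_X_def by blast
  ultimately show ?thesis
    using uniform_lower_bound_from_limits that by blast
qed

lemma angle_gt_on_XI:
  assumes "c < m" "\<And>\<rho>. m \<le> calabi_angle n u v \<rho>"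
    and "(calabi_angle n u v \<longlongrightarrow> L) at_bot" "(calabi_angle n u v \<longlongrightarrow> L') at_top"
  shows "angle_gt_on_X n u v c"
proof -
  have "m \<le> L" "m \<le> L'"
    by (rule tendsto_lowerbound[OF assms(3)], simp_all add: assms(2))
      (rule tendsto_lowerbound[OF assms(4)], simp_all add: assms(2))
  then show ?thesis
    unfolding angle_gt_on_X_def using assms by (meson less_le_trans)
qed

section \<open>A barrier on the cylinder\<close>

definition barrier :: "real \<Rightarrow> real" where
  "barrier r = ln (2 + exp r + exp (- r))"

definition barrier' :: "real \<Rightarrow> real" where
  "barrier' r = (exp r - exp (- r)) / (2 + exp r + exp (- r))"

definition barrier'' :: "real \<Rightarrow> real" where
  "barrier'' r = 2 / (2 + exp r + exp (- r))"

lemma barrier_denom_pos: "0 < 2 + exp r + exp (- r :: real)"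
  by (simp add: add_pos_pos)

lemma has_real_derivative_barrier: "(barrier has_real_derivative barrier' r) (at r)"
  using barrier_denom_pos[of r] unfolding barrier_def barrier'_def
  by (auto intro!: derivative_eq_intros simp: field_simps)

lemma has_real_derivative_barrier': "(barrier' has_real_derivative barrier'' r) (at r)"
proof -
  define d where "d = 2 + exp r + exp (- r)"
  have "exp r * exp (- r) = 1"
    by (simp add: exp_minus)
  then have "(exp r + exp (- r)) * d - (exp r - exp (- r)) * (exp r - exp (- r)) = 2 * d"
    by (simp add: d_def algebra_simps)
  moreover have "(barrier' has_real_derivative
      ((exp r + exp (- r)) * d - (exp r - exp (- r)) * (exp r - exp (- r))) / d\<^sup>2) (at r)"
    using barrier_denom_pos[of r] unfolding barrier'_def d_def
    by (auto intro!: derivative_eq_intros simp: power2_eq_square field_simps)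
  moreover have "2 * d / d\<^sup>2 = barrier'' r"
    using barrier_denom_pos[of r] by (simp add: barrier''_def flip: d_def) (simp add: power2_eq_square)
  ultimately show ?thesis
    by simp
qed

lemma abs_barrier'_le_1: "\<bar>barrier' r\<bar> \<le> 1"
proof -
  have "\<bar>exp r - exp (- r)\<bar> \<le> 2 + exp r + exp (- r)"
    using exp_gt_zero[of r] exp_gt_zero[of "- r"] by (simp add: abs_le_iff)
  then show ?thesis
    using barrier_denom_pos[of r] by (simp add: barrier'_def abs_divide)
qed

lemma barrier''_pos: "0 < barrier'' r"
  using barrier_denom_pos[of r] by (simp add: barrier''_def)

lemma barrier''_le_exp: "barrier'' r \<le> 2 * exp r" "barrier'' r \<le> 2 * exp (- r)"
proof -
  have "2 / exp (- r) = 2 * exp r" "2 / exp r = 2 * exp (- r)"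
    by (simp_all add: exp_minus divide_inverse)
  moreover have "barrier'' r \<le> 2 / exp (- r)" "barrier'' r \<le> 2 / exp r"
    unfolding barrier''_def by (auto intro!: divide_left_mono simp: add_pos_pos)
  ultimately show "barrier'' r \<le> 2 * exp r" "barrier'' r \<le> 2 * exp (- r)"
    by simp_all
qed

lemma abs_le_barrier: "\<bar>r\<bar> \<le> barrier r"
proof -
  have "exp \<bar>r\<bar> \<le> 2 + exp r + exp (- r)"
    by (cases "r \<ge> 0") auto
  then show ?thesis
    using barrier_denom_pos[of r] by (simp add: barrier_def ln_ge_iff)
qed

lemma barrier_pos: "0 < barrier r"
proof -
  have "1 < 2 + exp r + exp (- r)"
    by (simp add: add_pos_pos add.assoc)
  then show ?thesis
    by (simp add: barrier_def)
qed

lemma bdd_above_barrier''_div: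
  fixes g :: "real \<Rightarrow> real"
  assumes "continuous_on UNIV g" "\<And>\<rho>. 0 < g \<rho>"
    and "((\<lambda>\<rho>. g \<rho> / exp \<rho>) \<longlongrightarrow> l) at_bot" "0 < l"
    and "((\<lambda>\<rho>. g \<rho> / exp (- \<rho>)) \<longlongrightarrow> l') at_top" "0 < l'"
  shows "bdd_above (range (\<lambda>\<rho>. barrier'' \<rho> / g \<rho>))"
proof -
  have bound: "barrier'' \<rho> / g \<rho> \<le> 4 / k" if "k / 2 < g \<rho> / w" "0 < w" "barrier'' \<rho> \<le> 2 * w" "0 < k"
    for k w \<rho>
  proof -
    have "barrier'' \<rho> * k \<le> 2 * w * k"
      using that barrier''_pos[of \<rho>] by (intro mult_right_mono) auto
    also have "\<dots> \<le> 4 * g \<rho>"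
      using that by (simp add: field_simps)
    finally show ?thesis
      using that assms(2)[of \<rho>] by (simp add: field_simps)
  qed
  have "eventually (\<lambda>\<rho>. l / 2 < g \<rho> / exp \<rho>) at_bot"
    "eventually (\<lambda>\<rho>. l' / 2 < g \<rho> / exp (- \<rho>)) at_top"
    using order_tendstoD(1)[OF assms(3), of "l / 2"] order_tendstoD(1)[OF assms(5), of "l' / 2"] assms(4,6)
    by auto
  then have "eventually (\<lambda>\<rho>. barrier'' \<rho> / g \<rho> \<le> 4 / l) at_bot"
    "eventually (\<lambda>\<rho>. barrier'' \<rho> / g \<rho> \<le> 4 / l') at_top"
    using bound[OF _ exp_gt_zero barrier''_le_exp(1) \<open>0 < l\<close>]
      bound[OF _ exp_gt_zero barrier''_le_exp(2) \<open>0 < l'\<close>]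
    by (auto elim!: eventually_mono)
  then have bot: "eventually (\<lambda>\<rho>. - (max (4 / l) (4 / l')) \<le> - (barrier'' \<rho> / g \<rho>)) at_bot"
    and top: "eventually (\<lambda>\<rho>. - (max (4 / l) (4 / l')) \<le> - (barrier'' \<rho> / g \<rho>)) at_top"
    by (auto elim!: eventually_mono)
  have "g \<rho> \<noteq> 0" "2 + exp \<rho> + exp (- \<rho>) \<noteq> 0" for \<rho>
    using assms(2)[of \<rho>] barrier_denom_pos[of \<rho>] by simp_all
  then have "continuous_on UNIV (\<lambda>\<rho>. - (barrier'' \<rho> / g \<rho>))"
    unfolding barrier''_def using assms(1) by (intro continuous_intros) auto
  then obtain x0 where x0: "\<And>\<rho>. min (- (max (4 / l) (4 / l'))) (- (barrier'' x0 / g x0)) \<le> - (barrier'' \<rho> / g \<rho>)"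
    using continuous_lower_bound_from_ends[OF _ bot top] by blast
  show ?thesis
    by (rule bdd_aboveI2[where M="max (max (4 / l) (4 / l')) (barrier'' x0 / g x0)"])
      (use x0 in \<open>auto simp: min_le_iff_disj le_max_iff_disj\<close>)
qed

lemma calabi_kahler_bdd_above_barrier'':
  assumes "calabi_kahler a u"
  shows "bdd_above (range (\<lambda>\<rho>. barrier'' \<rho> / deriv (deriv u) \<rho>))"
proof -
  have u: "smooth1_on UNIV u" "\<And>\<rho>. 0 < deriv (deriv u) \<rho>"
    using assms unfolding calabi_kahler_def by auto
  have cont: "continuous_on UNIV (deriv (deriv u))"
    using smooth1_on_derivs(4)[OF u(1)] by (simp add: continuous_at_imp_continuous_on)
  obtain l l' where "((\<lambda>\<rho>. deriv (deriv u) \<rho> / exp \<rho>) \<longlongrightarrow> l) at_bot" "0 < l"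
    and "((\<lambda>\<rho>. deriv (deriv u) \<rho> / exp (- \<rho>)) \<longlongrightarrow> l') at_top" "0 < l'"
    using calabi_kahler_asymptotics[OF assms] by blast
  then show ?thesis
    by (intro bdd_above_barrier''_div[OF cont u(2)])
qed

section \<open>The minimum principle\<close>

lemma heat_term_lower_bound:
  fixes k c1 c2 B D \<epsilon> X1 X2 w M :: real
  assumes "0 \<le> k" "c1 \<in> {0<..1}" "c2 \<in> {0<..1}" "1 \<le> B" "0 < D" "0 \<le> \<epsilon>" "0 \<le> M"
    and X1: "\<bar>X1\<bar> \<le> \<epsilon>" and X2: "- (\<epsilon> * w) \<le> X2" and w: "w / D \<le> M"
  shows "- (\<epsilon> * (k + M)) \<le> k * c1 * (X1 / B) + c2 * (X2 / D)"
proof -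
  have "\<bar>c1 * (X1 / B)\<bar> = c1 * (\<bar>X1\<bar> / B)"
    using assms(2,4) by (simp add: abs_mult abs_divide)
  also have "\<dots> \<le> 1 * (\<bar>X1\<bar> / 1)"
    using assms(2,4) by (intro mult_mono divide_left_mono) auto
  finally have "- \<epsilon> \<le> c1 * (X1 / B)"
    using X1 by linarith
  then have "k * (- \<epsilon>) \<le> k * (c1 * (X1 / B))"
    using assms(1) by (rule mult_left_mono)
  moreover have "- (\<epsilon> * M) \<le> c2 * (X2 / D)"
  proof (cases "0 \<le> X2 / D")
    case True
    then have "0 \<le> c2 * (X2 / D)"
      using assms(3) by (intro mult_nonneg_nonneg) auto
    moreover have "0 \<le> \<epsilon> * M"
      using assms(6,7) by simp
    ultimately show ?thesis
      by linarith
  next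
    case False
    have "- (\<epsilon> * M) \<le> - (\<epsilon> * (w / D))"
      using mult_left_mono[OF w assms(6)] by simp
    also have "\<dots> \<le> X2 / D"
      using X2 assms(5) by (simp add: divide_right_mono[of "- (\<epsilon> * w)" X2 D, simplified])
    also have "\<dots> \<le> c2 * (X2 / D)"
      using mult_right_mono_neg[of c2 1 "X2 / D"] assms(3) False by simp
    finally show ?thesis .
  qed
  ultimately show ?thesis
    by (simp add: algebra_simps)
qed

lemma earliest_point_below:
  fixes Z :: "real \<Rightarrow> real \<Rightarrow> real"
  assumes cont: "continuous_on ({0..t1} \<times> UNIV) (\<lambda>p. Z (fst p) (snd p))"
    and far: "\<And>t \<rho>. t \<in> {0..t1} \<Longrightarrow> R \<le> \<bar>\<rho>\<bar> \<Longrightarrow> m < Z t \<rho>"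
    and below: "t \<in> {0..t1}" "Z t \<rho> \<le> m"
  obtains ts \<rho>s where "ts \<in> {0..t1}" "Z ts \<rho>s \<le> m"
    and "\<And>t \<rho>. t \<in> {0..t1} \<Longrightarrow> Z t \<rho> \<le> m \<Longrightarrow> ts \<le> t"
proof -
  define K where "K = {0..t1} \<times> {-R..R}"
  define S where "S = K \<inter> (\<lambda>p. Z (fst p) (snd p)) -` {..m}"
  have "compact K"
    by (simp add: K_def compact_Times)
  moreover have "closed S"
    unfolding S_def using \<open>compact K\<close>
    by (intro continuous_closed_preimage continuous_on_subset[OF cont])
      (auto simp: K_def compact_imp_closed)
  moreover have "S \<subseteq> K"
    by (simp add: S_def)
  ultimately have "compact S"
    by (meson bounded_subset compact_eq_bounded_closed compact_imp_bounded)
  have inS: "(t, \<rho>) \<in> S" if "t \<in> {0..t1}" "Z t \<rho> \<le> m" for t \<rho>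
    using far[OF that(1), of \<rho>] that by (force simp: S_def K_def)
  obtain p where "p \<in> S" "\<And>q. q \<in> S \<Longrightarrow> fst p \<le> fst q"
    using continuous_attains_inf[OF \<open>compact S\<close> _ continuous_on_fst[OF continuous_on_id]]
      inS[OF below] by blast
  then show ?thesis
    using that[of "fst p" "snd p"] inS by (force simp: S_def K_def)
qed

lemma first_time_below:
  fixes Z :: "real \<Rightarrow> real \<Rightarrow> real"
  assumes cont: "continuous_on ({0..t1} \<times> UNIV) (\<lambda>p. Z (fst p) (snd p))"
    and far: "\<And>t \<rho>. t \<in> {0..t1} \<Longrightarrow> R \<le> \<bar>\<rho>\<bar> \<Longrightarrow> m < Z t \<rho>"
    and init: "\<And>\<rho>. m < Z 0 \<rho>"
    and below: "t \<in> {0..t1}" "Z t \<rho> \<le> m"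
  obtains ts \<rho>s where "0 < ts" "ts \<le> t1" "\<And>r. Z ts \<rho>s \<le> Z ts r"
    and "\<And>s. 0 \<le> s \<Longrightarrow> s < ts \<Longrightarrow> Z ts \<rho>s < Z s \<rho>s"
proof -
  obtain ts \<rho>s where ts: "ts \<in> {0..t1}" "Z ts \<rho>s \<le> m"
    and first: "\<And>t \<rho>. t \<in> {0..t1} \<Longrightarrow> Z t \<rho> \<le> m \<Longrightarrow> ts \<le> t"
    using earliest_point_below[OF cont far below] by blast
  have "0 < ts"
    using ts init[of \<rho>s] by (cases "ts = 0") auto
  have earlier: "m < Z s r" if "0 \<le> s" "s < ts" for s r
    using first[of s r] ts that by force
  have "Z ts \<rho>s \<le> Z ts r" for r
  proof (rule ccontr)
    assume "\<not> ?thesis"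
    then have "0 < m - Z ts r"
      using ts by simp
    moreover have "continuous_on {0..t1} (\<lambda>s. Z s r)"
    proof -
      have "continuous_on {0..t1} (\<lambda>s. (s, r))" "(\<lambda>s. (s, r)) ` {0..t1} \<subseteq> {0..t1} \<times> UNIV"
        by (auto intro!: continuous_intros)
      from continuous_on_compose2[OF cont this] show ?thesis
        by simp
    qed
    ultimately obtain d where "0 < d"
      and d: "\<And>s. s \<in> {0..t1} \<Longrightarrow> dist s ts < d \<Longrightarrow> dist (Z s r) (Z ts r) < m - Z ts r"
      using ts(1) unfolding continuous_on_iff by blast
    define s where "s = max 0 (ts - d / 2)"
    have "s \<in> {0..t1}" "s < ts" "dist s ts < d"
      using ts \<open>0 < ts\<close> \<open>0 < d\<close> by (auto simp: s_def dist_real_def)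
    then have "Z s r < m"
      using d by (force simp: dist_real_def)
    then show False
      using earlier[of s r] \<open>s < ts\<close> by (simp add: s_def)
  qed
  moreover have "Z ts \<rho>s < Z s \<rho>s" if "0 \<le> s" "s < ts" for s
    using earlier[OF that, of \<rho>s] ts(2) by simp
  ultimately show ?thesis
    using that \<open>0 < ts\<close> ts(1) by auto
qed

(* \<Phi> extends (t, \<rho>) \<mapsto> \<phi>_t(\<rho>) smoothly to an open neighbourhood U of [0,T) \<times> \<real>,
   so that derivatives at t = 0 are two-sided. *)
locale calabi_flow =
  fixes n :: nat and a :: real and u v0 :: "real \<Rightarrow> real" and \<theta> T :: real
    and \<Phi> :: "real \<times> real \<Rightarrow> real" and U :: "(real \<times> real) set"
  assumes kahler: "calabi_kahler a u"
    and v0_smooth: "smooth1_on UNIV v0"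
    and open_U: "open U" and strip_subset_U: "{0..<T} \<times> UNIV \<subseteq> U"
    and \<Phi>_smooth: "smooth2_on U \<Phi>"
    and flow: "\<And>t \<rho>. t \<in> {0<..<T} \<Longrightarrow>
      pd1 \<Phi> (t, \<rho>) = calabi_angle n u (\<lambda>r. v0 r + \<Phi> (t, r)) \<rho> - \<theta>"
begin

definition \<Theta> :: "real \<Rightarrow> real \<Rightarrow> real" where
  "\<Theta> t \<rho> = real (n - 1) * arctan ((deriv v0 \<rho> + pd2 \<Phi> (t, \<rho>)) / deriv u \<rho>)
      + arctan ((deriv (deriv v0) \<rho> + pd2 (pd2 \<Phi>) (t, \<rho>)) / deriv (deriv u) \<rho>)"

definition barrier_bound :: real where
  "barrier_bound = (SUP \<rho>. barrier'' \<rho> / deriv (deriv u) \<rho>)"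

lemma u_smooth: "smooth1_on UNIV u"
  and u''_pos: "0 < deriv (deriv u) \<rho>"
  using kahler unfolding calabi_kahler_def by auto

lemma in_U: "t \<in> {0..<T} \<Longrightarrow> (t, \<rho>) \<in> U"
  using strip_subset_U by auto

lemma barrier''_div_le_bound: "barrier'' \<rho> / deriv (deriv u) \<rho> \<le> barrier_bound"
  unfolding barrier_bound_def
  by (rule cSUP_upper[OF UNIV_I calabi_kahler_bdd_above_barrier''[OF kahler]])

lemma barrier_bound_nonneg: "0 \<le> barrier_bound"
proof -
  have "0 < barrier'' 0 / deriv (deriv u) 0"
    using barrier''_pos[of 0] u''_pos[of 0] by simp
  then show ?thesis
    using barrier''_div_le_bound[of 0] by linarith
qed

lemma calabi_angle_eq_\<Theta>:
  assumes "t \<in> {0..<T}"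
  shows "calabi_angle n u (\<lambda>r. v0 r + \<Phi> (t, r)) = \<Theta> t"
proof -
  have "((\<lambda>r. v0 r + \<Phi> (t, r)) has_real_derivative deriv v0 \<rho> + pd2 \<Phi> (t, \<rho>)) (at \<rho>)" for \<rho>
    using smooth1_on_derivs(1)[OF v0_smooth] smooth2_on_has_pd2[OF \<Phi>_smooth in_U[OF assms]]
    by (auto intro!: derivative_intros)
  then have v': "deriv (\<lambda>r. v0 r + \<Phi> (t, r)) = (\<lambda>\<rho>. deriv v0 \<rho> + pd2 \<Phi> (t, \<rho>))"
    by (simp add: DERIV_imp_deriv fun_eq_iff)
  have "((\<lambda>\<rho>. deriv v0 \<rho> + pd2 \<Phi> (t, \<rho>)) has_real_derivative
      deriv (deriv v0) \<rho> + pd2 (pd2 \<Phi>) (t, \<rho>)) (at \<rho>)" for \<rho>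
    using smooth1_on_derivs(2)[OF v0_smooth]
      smooth2_on_has_pd2[OF smooth2_on_pd2[OF \<Phi>_smooth] in_U[OF assms]]
    by (auto intro!: derivative_intros)
  then have "deriv (deriv (\<lambda>r. v0 r + \<Phi> (t, r))) = (\<lambda>\<rho>. deriv (deriv v0) \<rho> + pd2 (pd2 \<Phi>) (t, \<rho>))"
    by (simp add: v' DERIV_imp_deriv fun_eq_iff)
  with v' show ?thesis
    by (simp add: calabi_angle_def \<Theta>_def fun_eq_iff)
qed

lemma continuous_on_\<Theta>: "continuous_on ({0..<T} \<times> UNIV) (\<lambda>p. \<Theta> (fst p) (snd p))"
proof -
  have "continuous_on ({0..<T} \<times> UNIV) (pd2 \<Phi>)" "continuous_on ({0..<T} \<times> UNIV) (pd2 (pd2 \<Phi>))"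
    using smooth2_on_imp_continuous_on[OF smooth2_on_pd2[OF \<Phi>_smooth]]
      smooth2_on_imp_continuous_on[OF smooth2_on_pd2[OF smooth2_on_pd2[OF \<Phi>_smooth]]]
      strip_subset_U by (auto intro: continuous_on_subset)
  moreover have "continuous_on S (\<lambda>p. f (snd p))" if "\<And>x. isCont f x" for S and f :: "real \<Rightarrow> real"
    using that by (intro continuous_on_compose2[OF continuous_at_imp_continuous_on[of UNIV f]]
      continuous_intros) auto
  moreover have "deriv u \<rho> \<noteq> 0" "deriv (deriv u) \<rho> \<noteq> 0" for \<rho>
    using calabi_kahler_deriv_ge_1[OF kahler, of \<rho>] u''_pos[of \<rho>] by auto
  ultimately show ?thesis
    unfolding \<Theta>_def using smooth1_on_derivs[OF u_smooth] smooth1_on_derivs[OF v0_smooth]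
    by (intro continuous_intros) auto
qed

lemma \<Theta>_bounded_below: "- ((real (n - 1) + 1) * (pi / 2)) < \<Theta> t \<rho>"
proof -
  let ?x = "(deriv v0 \<rho> + pd2 \<Phi> (t, \<rho>)) / deriv u \<rho>"
  let ?y = "(deriv (deriv v0) \<rho> + pd2 (pd2 \<Phi>) (t, \<rho>)) / deriv (deriv u) \<rho>"
  have "real (n - 1) * (- (pi / 2)) \<le> real (n - 1) * arctan ?x"
    using arctan_bounded[of ?x] by (intro mult_left_mono) auto
  moreover have "- (pi / 2) < arctan ?y"
    using arctan_bounded by simp
  moreover have "- ((real (n - 1) + 1) * (pi / 2)) = real (n - 1) * (- (pi / 2)) + - (pi / 2)"
    by (simp add: algebra_simps)
  ultimately show ?thesis
    unfolding \<Theta>_def by linarith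
qed

lemma has_time_derivative_\<Theta>:
  assumes "t \<in> {0..<T}"
  obtains c1 c2 where "c1 \<in> {0<..1}" "c2 \<in> {0<..1}"
    and "((\<lambda>s. \<Theta> s \<rho>) has_real_derivative
      real (n - 1) * c1 * (pd1 (pd2 \<Phi>) (t, \<rho>) / deriv u \<rho>)
      + c2 * (pd1 (pd2 (pd2 \<Phi>)) (t, \<rho>) / deriv (deriv u) \<rho>)) (at t)"
proof -
  define y1 where "y1 = (deriv v0 \<rho> + pd2 \<Phi> (t, \<rho>)) / deriv u \<rho>"
  define y2 where "y2 = (deriv (deriv v0) \<rho> + pd2 (pd2 \<Phi>) (t, \<rho>)) / deriv (deriv u) \<rho>"
  have "((\<lambda>s. \<Theta> s \<rho>) has_real_derivative
      real (n - 1) * inverse (1 + y1\<^sup>2) * (pd1 (pd2 \<Phi>) (t, \<rho>) / deriv u \<rho>)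
      + inverse (1 + y2\<^sup>2) * (pd1 (pd2 (pd2 \<Phi>)) (t, \<rho>) / deriv (deriv u) \<rho>)) (at t)"
    unfolding \<Theta>_def y1_def y2_def
    using smooth2_on_has_pd1[OF smooth2_on_pd2[OF \<Phi>_smooth] in_U[OF assms]]
      smooth2_on_has_pd1[OF smooth2_on_pd2[OF smooth2_on_pd2[OF \<Phi>_smooth]] in_U[OF assms]]
      calabi_kahler_deriv_ge_1[OF kahler, of \<rho>] u''_pos[of \<rho>]
    by (auto intro!: derivative_eq_intros)
  moreover have "inverse (1 + y\<^sup>2) \<in> {0<..1}" for y :: real
    by (simp add: add_pos_nonneg inverse_le_1_iff)
  ultimately show ?thesis
    using that by blast
qed

(* The flow equation makes \<Theta> t = pd1 \<Phi> (t, -) + \<theta>, so by symmetry of mixed partials the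
   time derivatives of v_t' and v_t'' are \<Theta>_t' and \<Theta>_t''. *)
lemma has_space_derivatives_\<Theta>:
  assumes "t \<in> {0<..<T}"
  shows "((\<lambda>r. \<Theta> t r) has_real_derivative pd1 (pd2 \<Phi>) (t, \<rho>)) (at \<rho>)"
    and "((\<lambda>r. pd1 (pd2 \<Phi>) (t, r)) has_real_derivative pd1 (pd2 (pd2 \<Phi>)) (t, \<rho>)) (at \<rho>)"
proof -
  have tU: "(t, r) \<in> U" for r
    using in_U assms by auto
  have "(\<lambda>r. \<Theta> t r) = (\<lambda>r. pd1 \<Phi> (t, r) + \<theta>)"
    using flow[OF assms] calabi_angle_eq_\<Theta> assms by auto
  then show "((\<lambda>r. \<Theta> t r) has_real_derivative pd1 (pd2 \<Phi>) (t, \<rho>)) (at \<rho>)"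
    using smooth2_on_has_pd2[OF smooth2_on_pd1[OF \<Phi>_smooth] tU]
      pd1_pd2_commute[OF open_U \<Phi>_smooth tU]
    by (auto intro!: derivative_eq_intros)
  show "((\<lambda>r. pd1 (pd2 \<Phi>) (t, r)) has_real_derivative pd1 (pd2 (pd2 \<Phi>)) (t, \<rho>)) (at \<rho>)"
    using smooth2_on_has_pd2[OF smooth2_on_pd1[OF smooth2_on_pd2[OF \<Phi>_smooth]] tU]
      pd1_pd2_commute[OF open_U smooth2_on_pd2[OF \<Phi>_smooth] tU]
    by simp
qed

lemma time_derivative_at_spatial_min:
  assumes "0 \<le> \<epsilon>" "t \<in> {0<..<T}"
    and min: "\<And>r. \<Theta> t \<rho> + \<epsilon> * barrier \<rho> \<le> \<Theta> t r + \<epsilon> * barrier r"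
  obtains D where "((\<lambda>s. \<Theta> s \<rho>) has_real_derivative D) (at t)"
    and "- (\<epsilon> * (real (n - 1) + barrier_bound)) \<le> D"
proof -
  have "((\<lambda>r. \<Theta> t r + \<epsilon> * barrier r) has_real_derivative pd1 (pd2 \<Phi>) (t, r) + \<epsilon> * barrier' r) (at r)"
    for r
    by (intro DERIV_add DERIV_cmult has_space_derivatives_\<Theta>(1)[OF assms(2)] has_real_derivative_barrier)
  moreover have "((\<lambda>r. pd1 (pd2 \<Phi>) (t, r) + \<epsilon> * barrier' r) has_real_derivative
      pd1 (pd2 (pd2 \<Phi>)) (t, \<rho>) + \<epsilon> * barrier'' \<rho>) (at \<rho>)"
    by (intro DERIV_add DERIV_cmult has_space_derivatives_\<Theta>(2)[OF assms(2)] has_real_derivative_barrier')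
  ultimately have X1: "pd1 (pd2 \<Phi>) (t, \<rho>) = - (\<epsilon> * barrier' \<rho>)"
    and X2: "- (\<epsilon> * barrier'' \<rho>) \<le> pd1 (pd2 (pd2 \<Phi>)) (t, \<rho>)"
    using DERIV_global_min_second_order[where f="\<lambda>r. \<Theta> t r + \<epsilon> * barrier r", OF min] by force+
  have "\<bar>pd1 (pd2 \<Phi>) (t, \<rho>)\<bar> \<le> \<epsilon>"
    using X1 abs_barrier'_le_1[of \<rho>] mult_left_mono[of "\<bar>barrier' \<rho>\<bar>" 1 \<epsilon>] assms(1)
    by (simp add: abs_mult)
  moreover obtain c1 c2 where "c1 \<in> {0<..1}" "c2 \<in> {0<..1}" and "((\<lambda>s. \<Theta> s \<rho>) has_real_derivative
      real (n - 1) * c1 * (pd1 (pd2 \<Phi>) (t, \<rho>) / deriv u \<rho>)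
      + c2 * (pd1 (pd2 (pd2 \<Phi>)) (t, \<rho>) / deriv (deriv u) \<rho>)) (at t)"
    using has_time_derivative_\<Theta> assms(2) by (metis greaterThanLessThan_iff atLeastLessThan_iff less_imp_le)
  ultimately show ?thesis
    using that heat_term_lower_bound[OF _ _ _ calabi_kahler_deriv_ge_1[OF kahler] u''_pos assms(1)
        barrier_bound_nonneg _ X2 barrier''_div_le_bound]
    by auto
qed

(* The term linear in t beats the error -\<epsilon> (n - 1 + barrier_bound) that the barrier
   contributes to the time derivative at a spatial minimum. *)
definition perturbed_angle :: "real \<Rightarrow> real \<Rightarrow> real \<Rightarrow> real" where
  "perturbed_angle \<epsilon> t \<rho> = \<Theta> t \<rho> + \<epsilon> * (barrier \<rho> + (real (n - 1) + barrier_bound + 1) * t)"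

lemma perturbed_angle_smaller_before_spatial_min:
  assumes "0 < \<epsilon>" "t \<in> {0<..<T}" and min: "\<And>r. perturbed_angle \<epsilon> t \<rho> \<le> perturbed_angle \<epsilon> t r"
  obtains s where "0 \<le> s" "s < t" "perturbed_angle \<epsilon> s \<rho> < perturbed_angle \<epsilon> t \<rho>"
proof -
  have "\<Theta> t \<rho> + \<epsilon> * barrier \<rho> \<le> \<Theta> t r + \<epsilon> * barrier r" for r
    using min[of r] by (simp add: perturbed_angle_def algebra_simps)
  then obtain D where D: "((\<lambda>s. \<Theta> s \<rho>) has_real_derivative D) (at t)"
    and "- (\<epsilon> * (real (n - 1) + barrier_bound)) \<le> D"
    using time_derivative_at_spatial_min assms(1,2) less_imp_le by metis
  then have "0 < D + \<epsilon> * (real (n - 1) + barrier_bound + 1)"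
    using assms(1) by (simp add: algebra_simps)
  moreover have "((\<lambda>s. perturbed_angle \<epsilon> s \<rho>) has_real_derivative
      D + \<epsilon> * (real (n - 1) + barrier_bound + 1)) (at t)"
    unfolding perturbed_angle_def using D by (auto intro!: derivative_eq_intros)
  ultimately obtain d where "0 < d"
    and d: "\<And>h. 0 < h \<Longrightarrow> h < d \<Longrightarrow> perturbed_angle \<epsilon> (t - h) \<rho> < perturbed_angle \<epsilon> t \<rho>"
    using DERIV_pos_inc_left by blast
  show ?thesis
    using that[of "t - min (d / 2) t"] d[of "min (d / 2) t"] \<open>0 < d\<close> assms(2) by auto
qed

lemma continuous_on_perturbed_angle:
  assumes "t1 < T"
  shows "continuous_on ({0..t1} \<times> UNIV) (\<lambda>p. perturbed_angle \<epsilon> (fst p) (snd p))"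
proof -
  have "{0..t1} \<times> UNIV \<subseteq> {0..<T} \<times> (UNIV :: real set)"
    using assms by auto
  then have "continuous_on ({0..t1} \<times> UNIV) (\<lambda>p. \<Theta> (fst p) (snd p))"
    by (rule continuous_on_subset[OF continuous_on_\<Theta>])
  moreover have "continuous_on ({0..t1} \<times> UNIV) (\<lambda>p. barrier (snd p))"
    using DERIV_isCont[OF has_real_derivative_barrier]
    by (intro continuous_on_compose2[OF continuous_at_imp_continuous_on[of UNIV barrier]]
        continuous_intros) auto
  ultimately show ?thesis
    unfolding perturbed_angle_def by (intro continuous_intros)
qed

lemma perturbed_angle_gt_far:
  assumes "0 < \<epsilon>" "0 \<le> s" "(\<bar>m\<bar> + (real (n - 1) + 1) * (pi / 2)) / \<epsilon> \<le> \<bar>r\<bar>"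
  shows "m < perturbed_angle \<epsilon> s r"
proof -
  have "\<bar>m\<bar> + (real (n - 1) + 1) * (pi / 2) \<le> \<epsilon> * \<bar>r\<bar>"
    using assms(1,3) by (simp add: pos_divide_le_eq mult.commute)
  also have "\<dots> \<le> \<epsilon> * barrier r"
    using abs_le_barrier assms(1) by (simp add: mult_left_mono)
  finally have "\<bar>m\<bar> + (real (n - 1) + 1) * (pi / 2) \<le> \<epsilon> * barrier r" .
  moreover have "0 \<le> \<epsilon> * ((real (n - 1) + barrier_bound + 1) * s)"
    using assms(1,2) barrier_bound_nonneg by simp
  ultimately show ?thesis
    using \<Theta>_bounded_below[of s r] unfolding perturbed_angle_def by (simp add: algebra_simps)
qed

lemma \<Theta>_lower_bound_preserved:
  assumes init: "\<And>\<rho>. m \<le> \<Theta> 0 \<rho>" and t: "t \<in> {0..<T}"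
  shows "m \<le> \<Theta> t \<rho>"
proof (rule ccontr)
  assume "\<not> m \<le> \<Theta> t \<rho>"
  define C where "C = barrier \<rho> + (real (n - 1) + barrier_bound + 1) * t"
  have "0 \<le> (real (n - 1) + barrier_bound + 1) * t"
    using barrier_bound_nonneg t by simp
  then have "0 < C"
    using barrier_pos[of \<rho>] by (simp add: C_def)
  define \<epsilon> where "\<epsilon> = (m - \<Theta> t \<rho>) / (C + 1)"
  have "0 < \<epsilon>"
    using \<open>\<not> m \<le> \<Theta> t \<rho>\<close> \<open>0 < C\<close> by (simp add: \<epsilon>_def)
  have below: "perturbed_angle \<epsilon> t \<rho> \<le> m"
    using \<open>0 < C\<close> \<open>0 < \<epsilon>\<close> by (simp add: perturbed_angle_def \<epsilon>_def C_def field_simps)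
  define R where "R = (\<bar>m\<bar> + (real (n - 1) + 1) * (pi / 2)) / \<epsilon>"
  have far: "m < perturbed_angle \<epsilon> s r" if "s \<in> {0..t}" "R \<le> \<bar>r\<bar>" for s r
    using perturbed_angle_gt_far[OF \<open>0 < \<epsilon>\<close>] that by (simp add: R_def)
  have init': "m < perturbed_angle \<epsilon> 0 r" for r
    using init[of r] mult_pos_pos[OF \<open>0 < \<epsilon>\<close> barrier_pos[of r]] by (simp add: perturbed_angle_def)
  have "t < T" "t \<in> {0..t}"
    using t by auto
  then obtain ts \<rho>s where "0 < ts" "ts \<le> t"
    and min: "\<And>r. perturbed_angle \<epsilon> ts \<rho>s \<le> perturbed_angle \<epsilon> ts r"
    and first: "\<And>s. 0 \<le> s \<Longrightarrow> s < ts \<Longrightarrow> perturbed_angle \<epsilon> ts \<rho>s < perturbed_angle \<epsilon> s \<rho>s"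
    using first_time_below[OF continuous_on_perturbed_angle far init' _ below] by blast
  moreover have "ts \<in> {0<..<T}"
    using \<open>0 < ts\<close> \<open>ts \<le> t\<close> \<open>t < T\<close> by simp
  ultimately obtain s where "0 \<le> s" "s < ts" "perturbed_angle \<epsilon> s \<rho>s < perturbed_angle \<epsilon> ts \<rho>s"
    using perturbed_angle_smaller_before_spatial_min[OF \<open>0 < \<epsilon>\<close>] by blast
  then show False
    using first by fastforce
qed

lemma angle_lower_bound_preserved:
  assumes "\<And>\<rho>. m \<le> calabi_angle n u (\<lambda>r. v0 r + \<Phi> (0, r)) \<rho>" and "t \<in> {0..<T}"
  shows "m \<le> calabi_angle n u (\<lambda>r. v0 r + \<Phi> (t, r)) \<rho>"
proof -
  have "0 \<in> {0..<T}"
    using assms(2) by simp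
  then show ?thesis
    using \<Theta>_lower_bound_preserved[of m t \<rho>] calabi_angle_eq_\<Theta> assms by simp
qed

end

lemma calabi_LBMCF_imp_calabi_flow:
  assumes "calabi_kahler a u" "calabi_potential p q v0" "calabi_LBMCF n u v0 \<theta> T \<phi>"
  obtains \<Phi> U where "calabi_flow n a u v0 \<theta> T \<Phi> U"
    and "\<And>t. t \<in> {0..<T} \<Longrightarrow> (\<lambda>r. v0 r + \<Phi> (t, r)) = (\<lambda>r. v0 r + \<phi> t r)"
    and "0 < T \<Longrightarrow> (\<lambda>r. v0 r + \<Phi> (0, r)) = v0"
proof -
  obtain U \<Phi> where U: "open U" "{0..<T} \<times> UNIV \<subseteq> U" and \<Phi>: "smooth2_on U \<Phi>"
    and \<Phi>_eq: "\<forall>t\<in>{0..<T}. \<forall>\<rho>. \<Phi> (t, \<rho>) = \<phi> t \<rho>"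
    using assms(3) unfolding calabi_LBMCF_def calabi_smooth_family_def by blast
  have v: "\<And>t. t \<in> {0..<T} \<Longrightarrow> (\<lambda>r. v0 r + \<Phi> (t, r)) = (\<lambda>r. v0 r + \<phi> t r)"
    using \<Phi>_eq by auto
  have "pd1 \<Phi> (t, \<rho>) = calabi_angle n u (\<lambda>r. v0 r + \<Phi> (t, r)) \<rho> - \<theta>" if t: "t \<in> {0<..<T}" for t \<rho>
  proof -
    have "((\<lambda>s. \<phi> s \<rho>) has_real_derivative calabi_angle n u (\<lambda>r. v0 r + \<phi> t r) \<rho> - \<theta>)
        (at t within {0..<T})"
      using assms(3) t unfolding calabi_LBMCF_def by auto
    moreover have "at t within {0..<T} = at t"
      by (rule at_within_open_subset[of t "{0<..<T}"]) (use t in auto)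
    ultimately have "((\<lambda>s. \<phi> s \<rho>) has_real_derivative calabi_angle n u (\<lambda>r. v0 r + \<phi> t r) \<rho> - \<theta>)
        (at t)"
      by simp
    then have "((\<lambda>s. \<Phi> (s, \<rho>)) has_real_derivative calabi_angle n u (\<lambda>r. v0 r + \<phi> t r) \<rho> - \<theta>)
        (at t)"
      by (rule has_field_derivative_transform_within_open[of _ _ _ "{0<..<T}"]) (use t \<Phi>_eq in auto)
    then show ?thesis
      using v[of t] t by (simp add: pd1_def DERIV_imp_deriv)
  qed
  moreover have "smooth1_on UNIV v0"
    using assms(2) by (simp add: calabi_potential_def)
  ultimately have "calabi_flow n a u v0 \<theta> T \<Phi> U"
    using assms(1) U \<Phi> by (intro calabi_flow.intro)
  moreover have "0 < T \<Longrightarrow> (\<lambda>r. v0 r + \<Phi> (0, r)) = v0"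
    using v[of 0] assms(3) by (simp add: calabi_LBMCF_def)
  ultimately show ?thesis
    using that v by blast
qed

theorem lemma4p2:
  fixes n :: nat and a p q \<theta> T :: real
    and u v0 :: "real \<Rightarrow> real" and \<phi> :: "real \<Rightarrow> real \<Rightarrow> real"
  assumes "n \<ge> 3"
    and "calabi_kahler a u"
    and "calabi_potential p q v0"
    and "T > 0"
    and "calabi_LBMCF n u v0 \<theta> T \<phi>"
    and "angle_gt_on_X n u v0 (real (n - 2) * pi / 2)"
  shows "\<forall>t\<in>{0..<T}. angle_gt_on_X n u (\<lambda>r. v0 r + \<phi> t r) (real (n - 2) * pi / 2)"
proof
  fix t assume t: "t \<in> {0..<T}"
  obtain \<Phi> U where flow: "calabi_flow n a u v0 \<theta> T \<Phi> U"
    and \<Phi>_t: "(\<lambda>r. v0 r + \<Phi> (t, r)) = (\<lambda>r. v0 r + \<phi> t r)"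
    and \<Phi>_0: "(\<lambda>r. v0 r + \<Phi> (0, r)) = v0"
    using calabi_LBMCF_imp_calabi_flow[OF assms(2,3,5)] t assms(4) by blast
  obtain m where "real (n - 2) * pi / 2 < m" and "\<And>\<rho>. m \<le> calabi_angle n u v0 \<rho>"
    using angle_gt_on_X_imp_uniform[OF assms(2,3,6)] by blast
  then have "m \<le> calabi_angle n u (\<lambda>r. v0 r + \<phi> t r) \<rho>" for \<rho>
    using calabi_flow.angle_lower_bound_preserved[OF flow _ t] \<Phi>_0 \<Phi>_t by metis
  moreover obtain L L' where "(calabi_angle n u (\<lambda>r. v0 r + \<phi> t r) \<longlongrightarrow> L) at_bot"
    and "(calabi_angle n u (\<lambda>r. v0 r + \<phi> t r) \<longlongrightarrow> L') at_top"
    using calabi_flow_angle_limits[OF assms(2,3) _ t] assms(5) unfolding calabi_LBMCF_def by blast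
  ultimately show "angle_gt_on_X n u (\<lambda>r. v0 r + \<phi> t r) (real (n - 2) * pi / 2)"
    using angle_gt_on_XI \<open>real (n - 2) * pi / 2 < m\<close> by blast
qed

end
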